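(* Let $\phi\in\,]0,\pi[$, $M\in\mathbb{R}$, $N>0$, let $\Sigma$ be the Keplerian branch around ${\rm O}$ in the plane ${\rm O}xy$ with equation $r=My+N$, and let $g$ be the affine map $(x_1,y_1)\mapsto(x_3,y_3)$ defined by $x_1=x_3-M\frac{\cos\phi}{\sin\phi}y_3-N\cos\phi$, $y_1=\frac{1}{\sin\phi}y_3$. Let a Keplerian orbit describe $\Sigma$, with areal constant $C$ and energy $H$, and consider the Keplerian orbit describing $g(\Sigma)$ in the direction induced by $g$. Then its areal constant is $C\sin\phi$ (the areal constant is multiplied by $\sin\phi$, as the areas are), and its energy equals $H$.
   Context: In the Euclidean plane ${\rm O}xy$, $r=\sqrt{x^2+y^2}$, and Newton's system $\ddot q=-q/r^3$ for $q=(x,y)$. The areal constant (angular momentum) is $C=x\dot y-y\dot x$ and the energy is $H=\frac12(\dot x^2+\dot y^2)-\frac1r$, both constant along solutions. A Keplerian branch is the image of a solution; for $\gamma>0$, the set $r=\alpha x+\beta y+\gamma$ is a Keplerian branch, described by exactly two Keplerian orbits (differing in orientation), which have $C^2=\gamma$. The image $g(\Sigma)$ is the Keplerian branch $r=x\cos\phi+yM\sin\phi+N\sin^2\phi$; $g$ maps the oriented curve $\Sigma$ onto an oriented curve, and the image orbit is the Keplerian orbit describing $g(\Sigma)$ in that direction, time-parametrized as a solution of Newton's system. *)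

theory Defs
  imports "HOL-Analysis.Analysis"
begin

text \<open>A solution of Newton's system  q'' = -q/r^3  in the plane, q = (x,y), defined
for all times (solutions with nonzero areal constant are global).\<close>
definition newton_solution :: "(real \<Rightarrow> real) \<Rightarrow> (real \<Rightarrow> real) \<Rightarrow> bool" where
  "newton_solution x y \<longleftrightarrow>
     (\<forall>t. (x t, y t) \<noteq> (0, 0)) \<and>
     (\<forall>t. x differentiable (at t) \<and> y differentiable (at t)) \<and>
     (\<forall>t. (deriv x has_real_derivative
              - x t / (sqrt ((x t)\<^sup>2 + (y t)\<^sup>2)) ^ 3) (at t) \<and>
          (deriv y has_real_derivative
              - y t / (sqrt ((x t)\<^sup>2 + (y t)\<^sup>2)) ^ 3) (at t))"

definition areal_const :: "(real \<Rightarrow> real) \<Rightarrow> (real \<Rightarrow> real) \<Rightarrow> real \<Rightarrow> real" where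
  "areal_const x y t = x t * deriv y t - y t * deriv x t"

definition kepler_energy :: "(real \<Rightarrow> real) \<Rightarrow> (real \<Rightarrow> real) \<Rightarrow> real \<Rightarrow> real" where
  "kepler_energy x y t =
     ((deriv x t)\<^sup>2 + (deriv y t)\<^sup>2) / 2 - 1 / sqrt ((x t)\<^sup>2 + (y t)\<^sup>2)"

end

theory Submission
  imports Defs
begin

(* A Newton solution conserves its areal constant C and its eccentricity vector e, and these
   give r = C^2 - e . q and |e|^2 = 1 + 2 H C^2: the orbit is a conic. If an orbit traces the
   branch r = alpha x + beta y + gamma, comparing the two equations at three non-collinear
   points of the branch yields e = -(alpha, beta), C^2 = gamma and
   2 H gamma = alpha^2 + beta^2 - 1. The branch r = M y + N and its image
   r = x cos phi + y M sin phi + N sin^2 phi therefore give C^2 = N and C^2 = N sin^2 phi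
   respectively, and the same energy (M^2 - 1) / (2 N). Since g preserves orientation, the two
   areal constants have the same sign. *)

lemma newton_solution_derivatives:
  assumes "newton_solution x y"
  shows "(x t, y t) \<noteq> (0, 0)"
    and "(x has_real_derivative deriv x t) (at t)" "(y has_real_derivative deriv y t) (at t)"
    and "(deriv x has_real_derivative - x t / sqrt ((x t)\<^sup>2 + (y t)\<^sup>2) ^ 3) (at t)"
    and "(deriv y has_real_derivative - y t / sqrt ((x t)\<^sup>2 + (y t)\<^sup>2) ^ 3) (at t)"
  using assms unfolding newton_solution_def by (auto simp: DERIV_deriv_iff_real_differentiable)

lemma has_real_derivative_radius:
  fixes f g :: "real \<Rightarrow> real"
  assumes "(f has_real_derivative f') (at t)" "(g has_real_derivative g') (at t)"
    and "(f t, g t) \<noteq> (0, 0)"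
  shows "((\<lambda>t. sqrt ((f t)\<^sup>2 + (g t)\<^sup>2)) has_real_derivative
           (f t * f' + g t * g') / sqrt ((f t)\<^sup>2 + (g t)\<^sup>2)) (at t)"
proof -
  have "(f t)\<^sup>2 + (g t)\<^sup>2 > 0" using assms(3) by (simp add: sum_power2_gt_zero_iff)
  have "((\<lambda>t. (f t)\<^sup>2 + (g t)\<^sup>2) has_real_derivative 2 * (f t * f' + g t * g')) (at t)"
    using DERIV_add[OF DERIV_mult[OF assms(1,1)] DERIV_mult[OF assms(2,2)]]
    by (simp add: power2_eq_square algebra_simps)
  from DERIV_chain2[OF DERIV_real_sqrt[OF \<open>_ > 0\<close>] this] show ?thesis
    by (rule DERIV_cong) (simp add: divide_simps algebra_simps)
qed

lemma areal_const_has_derivative: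
  assumes "newton_solution x y"
  shows "(areal_const x y has_real_derivative 0) (at t)"
proof -
  note d = newton_solution_derivatives[OF assms]
  have "areal_const x y = (\<lambda>t. x t * deriv y t - y t * deriv x t)"
    by (simp add: areal_const_def fun_eq_iff)
  with DERIV_diff[OF DERIV_mult[OF d(2) d(5)] DERIV_mult[OF d(3) d(4)]] show ?thesis
    by (simp add: algebra_simps)
qed

lemma areal_const_eq:
  assumes "newton_solution x y"
  shows "areal_const x y s = areal_const x y t"
  using DERIV_isconst_all[OF allI[OF areal_const_has_derivative[OF assms]]] by blast

(* The Laplace-Runge-Lenz vector, for unit mass and force constant. *)
definition eccentricity_vector ::
    "(real \<Rightarrow> real) \<Rightarrow> (real \<Rightarrow> real) \<Rightarrow> real \<Rightarrow> real \<times> real" where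
  "eccentricity_vector x y t =
     (deriv y t * areal_const x y t - x t / sqrt ((x t)\<^sup>2 + (y t)\<^sup>2),
      - deriv x t * areal_const x y t - y t / sqrt ((x t)\<^sup>2 + (y t)\<^sup>2))"

(* The derivative of the first component v C - x / r of the eccentricity vector, with
   x' = u, y' = v, v' = -y / r^3 and r' = (x u + y v) / r, vanishes. *)
lemma eccentricity_derivative_identity:
  fixes x y u v r :: real
  assumes "r > 0" "r\<^sup>2 = x\<^sup>2 + y\<^sup>2"
  shows "- y / r ^ 3 * (x * v - y * u) - (u * r - x * ((x * u + y * v) / r)) / (r * r) = 0"
proof -
  have "r ^ 3 * (- y / r ^ 3 * (x * v - y * u) - (u * r - x * ((x * u + y * v) / r)) / (r * r))
      = u * (x\<^sup>2 + y\<^sup>2 - r\<^sup>2)"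
    using assms(1) by (simp add: field_simps power2_eq_square power3_eq_cube)
  then show ?thesis using assms by simp
qed

lemma eccentricity_vector_has_derivative:
  assumes "newton_solution x y"
  shows "((\<lambda>t. fst (eccentricity_vector x y t)) has_real_derivative 0) (at t)"
    and "((\<lambda>t. snd (eccentricity_vector x y t)) has_real_derivative 0) (at t)"
proof -
  define r where "r t = sqrt ((x t)\<^sup>2 + (y t)\<^sup>2)" for t
  note d = newton_solution_derivatives[OF assms, folded r_def]
  have r: "r t > 0" "(r t)\<^sup>2 = (x t)\<^sup>2 + (y t)\<^sup>2"
    using d(1) by (simp_all add: r_def sum_power2_gt_zero_iff)
  have dr: "(r has_real_derivative (x t * deriv x t + y t * deriv y t) / r t) (at t)"
    using has_real_derivative_radius[OF d(2,3,1)] by (simp add: r_def[abs_def])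
  note dC = areal_const_has_derivative[OF assms]
  have C: "areal_const x y t = x t * deriv y t - y t * deriv x t"
    by (simp add: areal_const_def)
  have "((\<lambda>t. deriv y t * areal_const x y t - x t / r t) has_real_derivative 0) (at t)"
    by (rule DERIV_cong[OF DERIV_diff[OF DERIV_mult[OF d(5) dC] DERIV_divide[OF d(2) dr]]])
      (use r eccentricity_derivative_identity[OF r] in \<open>simp_all add: C\<close>)
  then show "((\<lambda>t. fst (eccentricity_vector x y t)) has_real_derivative 0) (at t)"
    by (simp add: eccentricity_vector_def r_def)
  have "((\<lambda>t. - deriv x t * areal_const x y t - y t / r t) has_real_derivative 0) (at t)"
    by (rule DERIV_cong[OF DERIV_diff[OF DERIV_mult[OF DERIV_minus[OF d(4)] dC]
          DERIV_divide[OF d(3) dr]]])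
      (use r eccentricity_derivative_identity[of "r t" "y t" "x t" "deriv x t" "deriv y t"]
        in \<open>simp_all add: C algebra_simps\<close>)
  then show "((\<lambda>t. snd (eccentricity_vector x y t)) has_real_derivative 0) (at t)"
    by (simp add: eccentricity_vector_def r_def)
qed

lemma eccentricity_vector_eq:
  assumes "newton_solution x y"
  shows "eccentricity_vector x y s = eccentricity_vector x y t"
  using DERIV_isconst_all[OF allI[OF eccentricity_vector_has_derivative(1)[OF assms]]]
    DERIV_isconst_all[OF allI[OF eccentricity_vector_has_derivative(2)[OF assms]]]
  by (metis prod.expand)

lemma eccentricity_vector_identities:
  fixes x y u v :: real
  defines "r \<equiv> sqrt (x\<^sup>2 + y\<^sup>2)" and "C \<equiv> x * v - y * u"
  assumes "(x, y) \<noteq> (0, 0)"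
  shows "r = C\<^sup>2 - (v * C - x / r) * x - (- u * C - y / r) * y"
    and "(v * C - x / r)\<^sup>2 + (- u * C - y / r)\<^sup>2 = 1 + 2 * ((u\<^sup>2 + v\<^sup>2) / 2 - 1 / r) * C\<^sup>2"
proof -
  have r2: "x\<^sup>2 + y\<^sup>2 = r\<^sup>2" unfolding r_def by simp
  have "r > 0" using assms(3) by (simp add: r_def sum_power2_gt_zero_iff)
  have "(x\<^sup>2 + y\<^sup>2) / r = r" "(x\<^sup>2 + y\<^sup>2) / r\<^sup>2 = 1"
    using \<open>r > 0\<close> unfolding r2 by (simp_all add: power2_eq_square)
  note radius = this
  have C: "x * v - y * u = C" by (simp add: C_def)
  have "C\<^sup>2 - (v * C - x / r) * x - (- u * C - y / r) * y = C * (C - (x * v - y * u)) + (x\<^sup>2 + y\<^sup>2) / r"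
    using \<open>r > 0\<close> by (simp add: field_simps power2_eq_square)
  then show "r = C\<^sup>2 - (v * C - x / r) * x - (- u * C - y / r) * y"
    unfolding C radius by simp
  have "(v * C - x / r)\<^sup>2 + (- u * C - y / r)\<^sup>2
      = (u\<^sup>2 + v\<^sup>2) * C\<^sup>2 - 2 * C * (x * v - y * u) / r + (x\<^sup>2 + y\<^sup>2) / r\<^sup>2"
    using \<open>r > 0\<close> by (simp add: field_simps power2_eq_square)
  also have "\<dots> = (u\<^sup>2 + v\<^sup>2) * C\<^sup>2 - 2 * C\<^sup>2 / r + 1"
    unfolding C radius by (simp add: power2_eq_square)
  finally show "(v * C - x / r)\<^sup>2 + (- u * C - y / r)\<^sup>2 = 1 + 2 * ((u\<^sup>2 + v\<^sup>2) / 2 - 1 / r) * C\<^sup>2"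
    by (simp add: field_simps)
qed

theorem newton_solution_conic:
  assumes "newton_solution x y"
  obtains C a b where "\<And>t. areal_const x y t = C"
    and "\<And>t. sqrt ((x t)\<^sup>2 + (y t)\<^sup>2) = C\<^sup>2 - a * x t - b * y t"
    and "\<And>t. a\<^sup>2 + b\<^sup>2 = 1 + 2 * kepler_energy x y t * C\<^sup>2"
proof
  fix t
  note identities = eccentricity_vector_identities[OF newton_solution_derivatives(1)[OF assms, of t],
      where u = "deriv x t" and v = "deriv y t", folded areal_const_def kepler_energy_def]
  show "areal_const x y t = areal_const x y 0"
    using areal_const_eq[OF assms] .
  show "sqrt ((x t)\<^sup>2 + (y t)\<^sup>2) = (areal_const x y 0)\<^sup>2
          - fst (eccentricity_vector x y 0) * x t - snd (eccentricity_vector x y 0) * y t"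
    using identities(1) areal_const_eq[OF assms, of 0 t] eccentricity_vector_eq[OF assms, of 0 t]
    by (simp add: eccentricity_vector_def)
  show "(fst (eccentricity_vector x y 0))\<^sup>2 + (snd (eccentricity_vector x y 0))\<^sup>2
          = 1 + 2 * kepler_energy x y t * (areal_const x y 0)\<^sup>2"
    using identities(2) areal_const_eq[OF assms, of 0 t] eccentricity_vector_eq[OF assms, of 0 t]
    by (simp add: eccentricity_vector_def)
qed

definition kepler_branch :: "real \<Rightarrow> real \<Rightarrow> real \<Rightarrow> (real \<times> real) set" where
  "kepler_branch \<alpha> \<beta> \<gamma> = {(x, y). sqrt (x\<^sup>2 + y\<^sup>2) = \<alpha> * x + \<beta> * y + \<gamma>}"

lemma affine_eq_zero_at_three_points:
  fixes p a b u v x y :: real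
  assumes "p + a * u + b * 0 = 0" "p + a * v + b * 0 = 0" "p + a * x + b * y = 0"
    and "u \<noteq> v" "y \<noteq> 0"
  shows "p = 0" "a = 0" "b = 0"
proof -
  have "a * u = a * v" using assms(1,2) by linarith
  then show "a = 0" using assms(4) by simp
  then show "p = 0" using assms(1) by simp
  with \<open>a = 0\<close> show "b = 0" using assms(3,5) by simp
qed

theorem newton_solution_on_kepler_branch:
  assumes "newton_solution x y"
    and "{(u, 0), (v, 0), (p, q)} \<subseteq> range (\<lambda>t. (x t, y t)) \<inter> kepler_branch \<alpha> \<beta> \<gamma>"
    and "u \<noteq> v" "q \<noteq> 0"
  shows "(areal_const x y t)\<^sup>2 = \<gamma>" "2 * kepler_energy x y t * \<gamma> = \<alpha>\<^sup>2 + \<beta>\<^sup>2 - 1"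
proof -
  obtain C a b where C: "\<And>t. areal_const x y t = C"
    and conic: "\<And>t. sqrt ((x t)\<^sup>2 + (y t)\<^sup>2) = C\<^sup>2 - a * x t - b * y t"
    and energy: "\<And>t. a\<^sup>2 + b\<^sup>2 = 1 + 2 * kepler_energy x y t * C\<^sup>2"
    using newton_solution_conic[OF assms(1)] by blast
  have vanish: "(C\<^sup>2 - \<gamma>) + (- a - \<alpha>) * X + (- b - \<beta>) * Y = 0"
    if "(X, Y) \<in> range (\<lambda>t. (x t, y t)) \<inter> kepler_branch \<alpha> \<beta> \<gamma>" for X Y
  proof -
    from that obtain s where "x s = X" "y s = Y" and "sqrt (X\<^sup>2 + Y\<^sup>2) = \<alpha> * X + \<beta> * Y + \<gamma>"
      by (auto simp: kepler_branch_def)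
    with conic[of s] show ?thesis by (simp add: algebra_simps)
  qed
  have "(u, 0) \<in> range (\<lambda>t. (x t, y t)) \<inter> kepler_branch \<alpha> \<beta> \<gamma>"
    "(v, 0) \<in> range (\<lambda>t. (x t, y t)) \<inter> kepler_branch \<alpha> \<beta> \<gamma>"
    "(p, q) \<in> range (\<lambda>t. (x t, y t)) \<inter> kepler_branch \<alpha> \<beta> \<gamma>"
    using assms(2) by auto
  from affine_eq_zero_at_three_points
    [OF vanish[OF this(1)] vanish[OF this(2)] vanish[OF this(3)] assms(3,4)]
  have "C\<^sup>2 = \<gamma>" "a = - \<alpha>" "b = - \<beta>" by simp_all
  then show "(areal_const x y t)\<^sup>2 = \<gamma>" "2 * kepler_energy x y t * \<gamma> = \<alpha>\<^sup>2 + \<beta>\<^sup>2 - 1"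
    using C energy[of t] by (auto simp: power2_eq_square)
qed

lemma kepler_branch_points:
  fixes M N :: real
  assumes "N > 0"
  shows "(N, 0) \<in> kepler_branch 0 M N" "(- N, 0) \<in> kepler_branch 0 M N"
    and "\<exists>x y. y \<noteq> 0 \<and> (x, y) \<in> kepler_branch 0 M N"
proof -
  show "(N, 0) \<in> kepler_branch 0 M N" "(- N, 0) \<in> kepler_branch 0 M N"
    using assms by (simp_all add: kepler_branch_def)
  define y where "y = N / (\<bar>M\<bar> + 2)"
  define x where "x = sqrt ((M * y + N)\<^sup>2 - y\<^sup>2)"
  have "y > 0" using assms by (simp add: y_def)
  have N: "N = (\<bar>M\<bar> + 2) * y" by (simp add: y_def)
  have "- \<bar>M\<bar> * y \<le> M * y" using \<open>y > 0\<close> by (intro mult_right_mono) auto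
  then have w: "M * y + N \<ge> 2 * y" unfolding N by (simp add: algebra_simps)
  then have "y\<^sup>2 \<le> (M * y + N)\<^sup>2" using \<open>y > 0\<close> by (intro power_mono) auto
  then have "x\<^sup>2 + y\<^sup>2 = (M * y + N)\<^sup>2" by (simp add: x_def)
  then have "(x, y) \<in> kepler_branch 0 M N"
    using w \<open>y > 0\<close> by (simp add: kepler_branch_def)
  moreover have "y \<noteq> 0" using \<open>y > 0\<close> by simp
  ultimately show "\<exists>x y. y \<noteq> 0 \<and> (x, y) \<in> kepler_branch 0 M N" by blast
qed

(* The map g of the statement with c = cos phi and s = sin phi, solved for the image point;
   it sends r = M y + N onto r = x cos phi + y M sin phi + N sin^2 phi. *)
lemma kepler_branch_shear:
  fixes c s M N :: real
  assumes "(x, y) \<in> kepler_branch 0 M N" and "s\<^sup>2 + c\<^sup>2 = 1"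
  shows "(x + c * (M * y + N), s * y) \<in> kepler_branch c (M * s) (N * s\<^sup>2)"
proof -
  define w where "w = M * y + N"
  have w: "sqrt (x\<^sup>2 + y\<^sup>2) = w" using assms(1) by (simp add: kepler_branch_def w_def)
  have w2: "x\<^sup>2 + y\<^sup>2 = w\<^sup>2" unfolding w[symmetric] by simp
  have "\<bar>x\<bar> = sqrt (x\<^sup>2)" by simp
  also have "\<dots> \<le> w" unfolding w[symmetric] by (intro real_sqrt_le_mono) simp
  finally have "\<bar>x\<bar> \<le> w" .
  have "\<bar>c\<bar> = sqrt (c\<^sup>2)" by simp
  also have "\<dots> \<le> sqrt (s\<^sup>2 + c\<^sup>2)" by (intro real_sqrt_le_mono) simp
  finally have "\<bar>c\<bar> \<le> 1" using assms(2) by simp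
  have "\<bar>c * x\<bar> \<le> 1 * w"
    unfolding abs_mult by (intro mult_mono \<open>\<bar>c\<bar> \<le> 1\<close> \<open>\<bar>x\<bar> \<le> w\<close>) simp_all
  then have pos: "c * x + w \<ge> 0" by linarith
  have s2: "s\<^sup>2 = 1 - c\<^sup>2" using assms(2) by simp
  have "(x + c * w)\<^sup>2 + (s * y)\<^sup>2 = (c * x + w)\<^sup>2 + s\<^sup>2 * (x\<^sup>2 + y\<^sup>2 - w\<^sup>2)"
    unfolding power_mult_distrib s2 by (simp add: power2_eq_square algebra_simps)
  then have "sqrt ((x + c * w)\<^sup>2 + (s * y)\<^sup>2) = c * x + w" using w2 pos by simp
  moreover have "c * x + w = c * (x + c * w) + M * s * (s * y) + N * s\<^sup>2"
    using assms(2) unfolding w_def by algebra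
  ultimately show ?thesis by (simp add: kepler_branch_def w_def)
qed

(* For c = 0 and s = 1 the last hypothesis says that the orbit traces r = M y + N itself. *)
lemma newton_solution_on_sheared_branch:
  fixes c s M N :: real
  assumes "newton_solution x y" and "N > 0" "s > 0" "s\<^sup>2 + c\<^sup>2 = 1"
    and "\<And>p q. (p, q) \<in> kepler_branch 0 M N \<Longrightarrow>
           (p + c * (M * q + N), s * q) \<in> range (\<lambda>t. (x t, y t))"
  shows "(areal_const x y t)\<^sup>2 = N * s\<^sup>2" "kepler_energy x y t = (M\<^sup>2 - 1) / (2 * N)"
proof -
  have image: "(p + c * (M * q + N), s * q)
      \<in> range (\<lambda>t. (x t, y t)) \<inter> kepler_branch c (M * s) (N * s\<^sup>2)"
    if "(p, q) \<in> kepler_branch 0 M N" for p q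
    using assms(5)[OF that] kepler_branch_shear[OF that assms(4)] by blast
  obtain p q where "q \<noteq> 0" "(p, q) \<in> kepler_branch 0 M N"
    using kepler_branch_points(3)[OF assms(2)] by blast
  with kepler_branch_points(1,2)[OF assms(2)]
  have "{(N + c * N, 0), (- N + c * N, 0), (p + c * (M * q + N), s * q)}
      \<subseteq> range (\<lambda>t. (x t, y t)) \<inter> kepler_branch c (M * s) (N * s\<^sup>2)"
    using image by fastforce
  from newton_solution_on_kepler_branch[OF assms(1) this] assms(2,3) \<open>q \<noteq> 0\<close>
  have areal: "(areal_const x y t)\<^sup>2 = N * s\<^sup>2"
    and energy: "2 * kepler_energy x y t * (N * s\<^sup>2) = c\<^sup>2 + (M * s)\<^sup>2 - 1"
    by simp_all
  show "(areal_const x y t)\<^sup>2 = N * s\<^sup>2" by (fact areal)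
  have "s\<^sup>2 * (2 * N * kepler_energy x y t) = c\<^sup>2 + (M * s)\<^sup>2 - 1"
    using energy by (simp add: algebra_simps)
  also have "\<dots> = s\<^sup>2 * (M\<^sup>2 - 1)"
    using assms(4) by (simp add: algebra_simps)
  finally have "2 * N * kepler_energy x y t = M\<^sup>2 - 1" using assms(3) by simp
  then show "kepler_energy x y t = (M\<^sup>2 - 1) / (2 * N)" using assms(2) by (simp add: field_simps)
qed

lemma range_sheared_reparametrization:
  assumes "surj \<tau>" and "\<And>\<sigma>. x3 \<sigma> = x1 (\<tau> \<sigma>) + c * (M * y1 (\<tau> \<sigma>) + N)"
    and "\<And>\<sigma>. y3 \<sigma> = s * y1 (\<tau> \<sigma>)" and "(p, q) \<in> range (\<lambda>t. (x1 t, y1 t))"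
  shows "(p + c * (M * q + N), s * q) \<in> range (\<lambda>\<sigma>. (x3 \<sigma>, y3 \<sigma>))"
proof -
  obtain t where "x1 t = p" "y1 t = q" using assms(4) by auto
  moreover obtain \<sigma> where "\<tau> \<sigma> = t" using surjD[OF assms(1), of t] by auto
  ultimately show ?thesis using assms(2,3) by force
qed

lemma filterlim_strict_mono_at:
  fixes \<tau> :: "real \<Rightarrow> real"
  assumes "strict_mono \<tau>" "isCont \<tau> s"
  shows "filterlim \<tau> (at (\<tau> s)) (at s)"
proof (rule filterlim_atI)
  show "(\<tau> \<longlongrightarrow> \<tau> s) (at s)" using assms(2) by (simp add: isCont_def)
  show "\<forall>\<^sub>F \<sigma> in at s. \<tau> \<sigma> \<noteq> \<tau> s"
    using assms(1) by (auto simp: eventually_at_filter strict_mono_eq)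
qed

lemma strict_mono_difference_quotient_pos:
  fixes \<tau> :: "real \<Rightarrow> real"
  assumes "strict_mono \<tau>" "\<sigma> \<noteq> s"
  shows "(\<tau> \<sigma> - \<tau> s) / (\<sigma> - s) > 0"
proof (cases "\<sigma> < s")
  case True
  then show ?thesis using assms(1) by (simp add: strict_monoD divide_neg_neg)
next
  case False
  then show ?thesis using assms by (simp add: strict_monoD)
qed

lemma has_real_derivative_reparametrization_sign:
  fixes f \<tau> :: "real \<Rightarrow> real"
  assumes f: "(f has_real_derivative D) (at (\<tau> s))"
    and f\<tau>: "((\<lambda>\<sigma>. f (\<tau> \<sigma>)) has_real_derivative E) (at s)"
    and \<tau>: "strict_mono \<tau>" "isCont \<tau> s"
  shows "0 \<le> D * E"
proof (cases "D = 0")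
  case False
  define Q where "Q t = (f t - f (\<tau> s)) / (t - \<tau> s)" for t
  have "(Q \<longlongrightarrow> D) (at (\<tau> s))" using f by (simp add: has_field_derivative_iff Q_def[abs_def])
  then have "((\<lambda>\<sigma>. Q (\<tau> \<sigma>) * D) \<longlongrightarrow> D * D) (at s)"
    by (intro tendsto_intros filterlim_compose[OF _ filterlim_strict_mono_at[OF \<tau>]])
  moreover have "D * D > 0" using False by (metis not_real_square_gt_zero)
  ultimately have "\<forall>\<^sub>F \<sigma> in at s. Q (\<tau> \<sigma>) * D > 0" by (rule order_tendstoD(1))
  moreover have "\<forall>\<^sub>F \<sigma> in at s. \<sigma> \<noteq> s" by (simp add: eventually_at_filter)
  ultimately have "\<forall>\<^sub>F \<sigma> in at s. 0 \<le> (f (\<tau> \<sigma>) - f (\<tau> s)) / (\<sigma> - s) * D"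
  proof eventually_elim
    case (elim \<sigma>)
    have "\<tau> \<sigma> \<noteq> \<tau> s" using \<tau>(1) elim(2) by (simp add: strict_mono_eq)
    then have "(f (\<tau> \<sigma>) - f (\<tau> s)) / (\<sigma> - s) * D = Q (\<tau> \<sigma>) * D * ((\<tau> \<sigma> - \<tau> s) / (\<sigma> - s))"
      by (simp add: Q_def)
    also have "\<dots> > 0"
      using elim(1) strict_mono_difference_quotient_pos[OF \<tau>(1) elim(2)] by (rule mult_pos_pos)
    finally show ?case by simp
  qed
  moreover have "((\<lambda>\<sigma>. (f (\<tau> \<sigma>) - f (\<tau> s)) / (\<sigma> - s) * D) \<longlongrightarrow> E * D) (at s)"
    using f\<tau> by (intro tendsto_intros) (simp add: has_field_derivative_iff)
  ultimately show ?thesis by (simp add: tendsto_lowerbound mult.commute)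
qed simp

lemma power2_eq_imp_eq_of_mult_nonneg:
  fixes a b :: real
  assumes "a\<^sup>2 = b\<^sup>2" "0 \<le> a * b"
  shows "a = b"
proof -
  from assms(1) have "a = b \<or> a = - b" by (simp add: power2_eq_iff)
  then show ?thesis
  proof
    assume "a = - b"
    with assms(2) have "b\<^sup>2 \<le> 0" by (simp add: power2_eq_square)
    then show ?thesis using \<open>a = - b\<close> by simp
  qed
qed

(* At a crossing of the positive x-axis the areal constants are x y'; the orbits cross it
   simultaneously, and y3 = k (y1 o tau) with tau increasing forces y1' and y3' to have the same
   sign there. *)
lemma areal_const_reparametrization:
  fixes k :: real
  assumes "newton_solution x1 y1" "newton_solution x3 y3"
    and "strict_mono \<tau>" "isCont \<tau> \<sigma>" and "k > 0" "\<And>\<sigma>. y3 \<sigma> = k * y1 (\<tau> \<sigma>)"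
    and "y1 (\<tau> \<sigma>) = 0" "x1 (\<tau> \<sigma>) > 0" "x3 \<sigma> > 0"
    and "(areal_const x3 y3 \<sigma>)\<^sup>2 = (k * areal_const x1 y1 (\<tau> \<sigma>))\<^sup>2"
  shows "areal_const x3 y3 \<sigma> = k * areal_const x1 y1 (\<tau> \<sigma>)"
proof (rule power2_eq_imp_eq_of_mult_nonneg[OF assms(10)])
  have "(\<lambda>\<sigma>. y1 (\<tau> \<sigma>)) = (\<lambda>\<sigma>. y3 \<sigma> / k)" using assms(5,6) by simp
  then have "((\<lambda>\<sigma>. y1 (\<tau> \<sigma>)) has_real_derivative deriv y3 \<sigma> / k) (at \<sigma>)"
    using DERIV_cdivide[OF newton_solution_derivatives(3)[OF assms(2)]] by simp
  from has_real_derivative_reparametrization_sign[OF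
      newton_solution_derivatives(3)[OF assms(1)] this assms(3,4)]
  have "0 \<le> deriv y1 (\<tau> \<sigma>) * deriv y3 \<sigma>"
    using assms(5) by (simp add: zero_le_mult_iff zero_le_divide_iff)
  moreover have "areal_const x3 y3 \<sigma> * (k * areal_const x1 y1 (\<tau> \<sigma>))
      = (k * x3 \<sigma> * x1 (\<tau> \<sigma>)) * (deriv y1 (\<tau> \<sigma>) * deriv y3 \<sigma>)"
    using assms(6,7) by (simp add: areal_const_def ac_simps)
  moreover have "0 \<le> k * x3 \<sigma> * x1 (\<tau> \<sigma>)" using assms(5,8,9) by simp
  ultimately show "0 \<le> areal_const x3 y3 \<sigma> * (k * areal_const x1 y1 (\<tau> \<sigma>))"
    by (metis mult_nonneg_nonneg)
qed

theorem lemma9: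
  fixes \<phi> M N :: real
    and x1 y1 x3 y3 :: "real \<Rightarrow> real"
    and \<tau> :: "real \<Rightarrow> real"
  assumes "0 < \<phi>" and "\<phi> < pi" and "N > 0"
    and "newton_solution x1 y1"
    and "(\<lambda>t. (x1 t, y1 t)) ` UNIV = {(x, y). sqrt (x\<^sup>2 + y\<^sup>2) = M * y + N}"
    and "newton_solution x3 y3"
    and "strict_mono \<tau>" and "continuous_on UNIV \<tau>" and "surj \<tau>"
    and "\<forall>s. x1 (\<tau> s) = x3 s - M * (cos \<phi> / sin \<phi>) * y3 s - N * cos \<phi>
            \<and> y1 (\<tau> s) = (1 / sin \<phi>) * y3 s"
  shows "\<forall>s t. areal_const x3 y3 s = areal_const x1 y1 t * sin \<phi>
            \<and> kepler_energy x3 y3 s = kepler_energy x1 y1 t"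
proof (intro allI conjI)
  define c s where "c = cos \<phi>" and "s = sin \<phi>"
  have "s > 0" using assms(1,2) by (simp add: s_def sin_gt_zero)
  have sc: "s\<^sup>2 + c\<^sup>2 = 1" by (simp add: s_def c_def)
  have g: "x1 (\<tau> \<sigma>) = x3 \<sigma> - M * (c / s) * y3 \<sigma> - N * c" "y1 (\<tau> \<sigma>) = y3 \<sigma> / s" for \<sigma>
    using assms(10) unfolding c_def s_def by auto
  have y3: "y3 \<sigma> = s * y1 (\<tau> \<sigma>)" for \<sigma> using g(2) \<open>s > 0\<close> by simp
  have x3: "x3 \<sigma> = x1 (\<tau> \<sigma>) + c * (M * y1 (\<tau> \<sigma>) + N)" for \<sigma>
    using g(1)[of \<sigma>] \<open>s > 0\<close> unfolding y3 by (simp add: algebra_simps)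
  have orbit1: "(p + 0 * (M * q + N), 1 * q) \<in> range (\<lambda>t. (x1 t, y1 t))"
    if "(p, q) \<in> kepler_branch 0 M N" for p q
    using that assms(5) by (simp add: kepler_branch_def)
  note orbit1_consts = newton_solution_on_sheared_branch[OF assms(4,3) _ _ orbit1, simplified]
  note orbit3_consts = newton_solution_on_sheared_branch[OF assms(6,3) \<open>s > 0\<close> sc
      range_sheared_reparametrization[OF assms(9) x3 y3 orbit1[simplified]]]
  fix \<sigma> t
  show "kepler_energy x3 y3 \<sigma> = kepler_energy x1 y1 t"
    using orbit1_consts(2) orbit3_consts(2) by simp
  obtain t0 where "x1 t0 = N" "y1 t0 = 0"
    using orbit1[OF kepler_branch_points(1)[OF assms(3)]] by auto
  then obtain \<sigma>0 where \<sigma>0: "x1 (\<tau> \<sigma>0) = N" "y1 (\<tau> \<sigma>0) = 0"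
    using surjD[OF assms(9), of t0] by auto
  have "c > -1" using cos_monotone_0_pi[of \<phi> pi] assms(1,2) by (simp add: c_def)
  then have "x3 \<sigma>0 > 0" using x3[of \<sigma>0] \<sigma>0 mult_strict_right_mono[of "-1" c N] assms(3) by simp
  with \<sigma>0 have "areal_const x3 y3 \<sigma>0 = s * areal_const x1 y1 (\<tau> \<sigma>0)"
    using assms(3,8) \<open>s > 0\<close> orbit1_consts(1) orbit3_consts(1)
    by (intro areal_const_reparametrization[OF assms(4,6,7) _ _ y3])
      (simp_all add: continuous_on_eq_continuous_at power_mult_distrib)
  then show "areal_const x3 y3 \<sigma> = areal_const x1 y1 t * sin \<phi>"
    unfolding areal_const_eq[OF assms(4), of t "\<tau> \<sigma>0"] areal_const_eq[OF assms(6), of \<sigma> \<sigma>0]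
    by (simp add: s_def)
qed

end
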